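(* Let $n\geq 3$, fix $0<\rho<1$ and put $\delta:=\frac{n-2}{n}\rho$. Define, for $t\in[-1,1]$, \begin{align*} F(t) &:= \int_{-1}^{1} |\delta t-x| (1-x^2)^{\frac {n-3}{2}}\, dx,\\ G(t) &:= (n-2)\rho t \int_{-1}^{1} |\delta t-x| (1-x^2)^{\frac {n-3}{2}} x\, dx,\\ H(t) &:= \frac {2}{n^2-1} (1-\delta^2 t^2)^{\frac {n+1}{2}} \sum_{k=2}^{\infty} \frac {(k-2)!}{(n+2)_{k-2}} C_{k-2}^{\frac {n+2}{2}}(\delta t)\, C_{k}^{\frac {n-2}{2}}(t)\, \rho^{k}. \end{align*} Then for $t\in(-1,1)$, \begin{align*} F''(t)+G''(t)+H''(t) &= 2 \delta^2 (1-\delta^2 t^2)^{\frac {n-3}{2}} \sum_{k=0}^{\infty} \frac {k!}{(n-2)_k} C_k^{\frac {n-2}{2}}(\delta t) C_k^{\frac {n-2}{2}}(t)\, \rho^k \\ &\quad - \frac {4n \delta^2}{n-1} (1-\delta^2 t^2)^{\frac {n-1}{2}} \sum_{k=0}^{\infty} \frac {k!}{(n)_k} C_k^{\frac {n}{2}}(\delta t) C_k^{\frac {n}{2}}(t)\, \rho^k \\ &\quad + \frac {2n^3 \delta^2}{(n+1)(n-1)(n-2)} (1-\delta^2 t^2)^{\frac {n+1}{2}} \sum_{k=0}^{\infty} \frac {k!}{(n+2)_k} C_k^{\frac {n+2}{2}}(\delta t) C_k^{\frac {n+2}{2}}(t)\, \rho^k. \end{align*}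
   Context: $C_k^\lambda$ is the Gegenbauer polynomial of degree $k$ associated to $\lambda$, defined by $(1-2xz+z^2)^{-\lambda}=\sum_{k\ge0}C_k^\lambda(x)z^k$; $(a)_0=1$, $(a)_k=a(a+1)\cdots(a+k-1)$ is the Pochhammer symbol. *)

theory Defs
  imports "HOL-Analysis.Analysis" "HOL-Computational_Algebra.Formal_Power_Series"
begin

text \<open>Gegenbauer polynomial C_k^lam(x), defined as the k-th coefficient of the formal
power series (1 - 2 x z + z^2)^(-lam) = (1 + (z^2 - 2 x z))^(-lam), i.e. the
binomial series (1+Y)^(-lam) composed with Y = z^2 - 2 x z.\<close>
definition gegenbauer :: "real \<Rightarrow> nat \<Rightarrow> real \<Rightarrow> real" where
  "gegenbauer lam k x =
     fps_nth (fps_compose (fps_binomial (- lam)) (fps_X ^ 2 - fps_const (2 * x) * fps_X)) k"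

end

theory Submission
  imports Defs
begin

(* Put lambda = (n - 2)/2, so that delta (lambda + 1) = lambda rho. Since the second derivative of
   a |-> integral |a - x| g(x) dx is 2 g(a), F'' and G'' are elementary. Every summand of H has the
   form (1 - a^2)^(lambda + 3/2) C^(lambda+2)_j(a) C^lambda_(j+2)(t) with a = delta t. Both factors
   lower their parameter under differentiation: (C^m_(k+1))' = 2 m C^(m+1)_k, and the Gegenbauer
   ODE turns the derivative of (1 - a^2)^(m + 1/2) C^(m+1)_k(a) into a multiple of
   (1 - a^2)^(m - 1/2) C^m_(k+1)(a). Hence H'' is a combination of the three kernel series with
   parameters lambda, lambda + 1, lambda + 2, shifted by two, one and no terms; the relation between
   delta and rho makes the coefficients match, and the missing initial terms are exactly F'' + G''.
   Termwise differentiation is justified by the bound |C^m_k(x)| <= C^m_k(1) = (2m)_k / k!, which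
   grows polynomially in k. *)

section \<open>Gegenbauer polynomials\<close>

definition gegenbauer_gf :: "real \<Rightarrow> real \<Rightarrow> real fps" where
  "gegenbauer_gf l x = fps_binomial (- l) oo (fps_X\<^sup>2 - fps_const (2 * x) * fps_X)"

lemma gegenbauer_eq_gf_nth: "gegenbauer l k x = fps_nth (gegenbauer_gf l x) k"
  by (simp add: gegenbauer_def gegenbauer_gf_def)

lemma gegenbauer_0 [simp]: "gegenbauer l 0 x = 1"
  by (simp add: gegenbauer_eq_gf_nth gegenbauer_gf_def)

lemma gegenbauer_gf_param_shift:
  "gegenbauer_gf l x = (1 - fps_const (2 * x) * fps_X + fps_X\<^sup>2) * gegenbauer_gf (l + 1) x"
proof -
  have "fps_binomial (- l) = (1 + fps_X) * fps_binomial (- (l + 1))"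
    using fps_binomial_add_mult[of 1 "- (l + 1)"] by (simp add: fps_binomial_1)
  then show ?thesis
    by (simp add: gegenbauer_gf_def fps_compose_mult_distrib fps_compose_add_distrib algebra_simps)
qed

lemma fps_deriv_gegenbauer_gf:
  "fps_deriv (gegenbauer_gf l x) = fps_const (2 * l) * (fps_const x - fps_X) * gegenbauer_gf (l + 1) x"
proof -
  have "fps_deriv (fps_binomial c) = fps_const c * fps_binomial (c - 1)" for c :: real
    by (rule fps_ext) (simp add: gbinomial_absorption del: of_nat_Suc)
  moreover have "fps_deriv (fps_X\<^sup>2 - fps_const (2 * x) * fps_X) = 2 * fps_X - fps_const (2 * x)"
    by (rule fps_ext) (auto simp: fps_X_power_mult_nth numeral_2_eq_2 power2_eq_square)
  ultimately have "fps_deriv (gegenbauer_gf l x)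
      = fps_const (- l) * gegenbauer_gf (l + 1) x * (2 * fps_X - fps_const (2 * x))"
    by (simp add: gegenbauer_gf_def fps_compose_deriv fps_compose_mult_distrib)
  also have "\<dots> = fps_const (2 * l) * (fps_const x - fps_X) * gegenbauer_gf (l + 1) x"
  proof -
    have h: "fps_const (2 * c) = 2 * fps_const c" "fps_const (- c) = - fps_const c" for c :: real
      by (simp_all add: fps_numeral_fps_const fps_const_mult)
    show ?thesis
      unfolding h by algebra
  qed
  finally show ?thesis .
qed

lemma gegenbauer_1 [simp]: "gegenbauer l (Suc 0) x = 2 * l * x"
  using arg_cong[OF fps_deriv_gegenbauer_gf, of "\<lambda>f. fps_nth f 0" l x]
  by (simp flip: gegenbauer_eq_gf_nth)

lemma gegenbauer_Suc_Suc_recurrence: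
  "(real k + 2) * gegenbauer l (Suc (Suc k)) x =
     2 * l * (x * gegenbauer (l + 1) (Suc k) x - gegenbauer (l + 1) k x)"
  using arg_cong[OF fps_deriv_gegenbauer_gf, of "\<lambda>f. fps_nth f (Suc k)" l x]
  by (simp add: algebra_simps flip: gegenbauer_eq_gf_nth)

lemma gegenbauer_Suc_Suc:
  "gegenbauer l (Suc (Suc k)) x =
     2 * l / (real k + 2) * (x * gegenbauer (l + 1) (Suc k) x - gegenbauer (l + 1) k x)"
  using gegenbauer_Suc_Suc_recurrence[of k l x] by (simp add: field_simps)

lemma gegenbauer_Suc_param_shift:
  "(real k + 1 + 2 * l) * gegenbauer l (Suc k) x =
     2 * l * (gegenbauer (l + 1) (Suc k) x - x * gegenbauer (l + 1) k x)"
proof -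
  have "fps_X * fps_deriv (gegenbauer_gf l x) + fps_const (2 * l) * gegenbauer_gf l x
      = fps_const (2 * l) * (1 - fps_const x * fps_X) * gegenbauer_gf (l + 1) x"
    by (subst (2) gegenbauer_gf_param_shift)
       (simp add: fps_deriv_gegenbauer_gf algebra_simps power2_eq_square
         flip: fps_const_mult)
  from arg_cong[OF this, of "\<lambda>f. fps_nth f (Suc k)"] show ?thesis
    by (simp add: algebra_simps flip: gegenbauer_eq_gf_nth)
qed

lemma gegenbauer_minus: "gegenbauer l k (- x) = (- 1) ^ k * gegenbauer l k x"
proof -
  have "fps_X\<^sup>2 - fps_const (2 * - x) * fps_X = (fps_X\<^sup>2 - fps_const (2 * x) * fps_X) oo - fps_X"
    by (simp add: fps_compose_sub_distrib flip: fps_compose_power fps_const_mult_apply_left fps_const_neg)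
  then have "gegenbauer_gf l (- x) = gegenbauer_gf l x oo - fps_X"
    by (simp add: gegenbauer_gf_def fps_compose_assoc)
  then show ?thesis
    by (simp add: gegenbauer_eq_gf_nth fps_compose_uminus')
qed

lemma fact_mult_gegenbauer_1: "fact k * gegenbauer l k 1 = pochhammer (2 * l) k"
proof (induction k arbitrary: l rule: induct_nat_012)
  case (ge2 k)
  have "fact (Suc (Suc k)) * gegenbauer l (Suc (Suc k)) 1
      = fact (Suc k) * ((real k + 2) * gegenbauer l (Suc (Suc k)) 1)"
    by (simp add: algebra_simps)
  also have "\<dots> = 2 * l * (fact (Suc k) * gegenbauer (l + 1) (Suc k) 1
      - (real k + 1) * (fact k * gegenbauer (l + 1) k 1))"
    unfolding gegenbauer_Suc_Suc_recurrence by (simp add: algebra_simps)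
  also have "\<dots> = 2 * l * (pochhammer (2 * l + 2) (Suc k) - (real k + 1) * pochhammer (2 * l + 2) k)"
    using ge2.IH[of "l + 1"] by (simp add: algebra_simps)
  also have "\<dots> = 2 * l * (2 * l + 1) * pochhammer (2 * l + 2) k"
    by (simp add: pochhammer_Suc algebra_simps)
  also have "\<dots> = pochhammer (2 * l) (Suc (Suc k))"
    by (simp add: pochhammer_rec add.assoc)
  finally show ?case .
qed simp_all

lemma has_real_derivative_gegenbauer:
  "(gegenbauer l (Suc k) has_real_derivative 2 * l * gegenbauer (l + 1) k x) (at x)"
proof (induction k arbitrary: l x rule: induct_nat_012)
  case 0
  have "gegenbauer l (Suc 0) = (\<lambda>x. 2 * l * x)"
    by auto
  then show ?case
    by (auto intro!: derivative_eq_intros)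
next
  case 1
  have "gegenbauer l (Suc (Suc 0)) = (\<lambda>x. l * (2 * (l + 1) * x\<^sup>2 - 1))"
    by (auto simp: gegenbauer_Suc_Suc power2_eq_square algebra_simps)
  then show ?case
    by (auto intro!: derivative_eq_intros simp: algebra_simps)
next
  case (ge2 k)
  have ll: "l + 1 + 1 = l + 2"
    by simp
  define E F1 F0 where "E = gegenbauer (l + 1) (Suc (Suc k))"
    and "F1 = gegenbauer (l + 2) (Suc k)" and "F0 = gegenbauer (l + 2) k"
  have "gegenbauer l (Suc (Suc (Suc k))) = (\<lambda>x. 2 * l / (real k + 3) * (x * E x - gegenbauer (l + 1) (Suc k) x))"
    by (rule ext) (simp add: gegenbauer_Suc_Suc[where k = "Suc k"] E_def add.commute)
  moreover have "((\<lambda>x. 2 * l / (real k + 3) * (x * E x - gegenbauer (l + 1) (Suc k) x))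
      has_real_derivative 2 * l / (real k + 3) * (E x + (x * (2 * (l + 1) * F1 x) - 2 * (l + 1) * F0 x))) (at x)"
    using ge2.IH[of "l + 1"] unfolding E_def F1_def F0_def ll by (auto intro!: derivative_eq_intros)
  moreover have "x * (2 * (l + 1) * F1 x) - 2 * (l + 1) * F0 x = (real k + 2) * E x"
    using gegenbauer_Suc_Suc_recurrence[of k "l + 1" x] unfolding E_def F1_def F0_def ll by (simp add: algebra_simps)
  then have "2 * l / (real k + 3) * (E x + (x * (2 * (l + 1) * F1 x) - 2 * (l + 1) * F0 x)) = 2 * l * E x"
    by (simp add: field_simps)
  ultimately show ?case
    by (simp add: E_def)
qed

lemma deriv_gegenbauer_Suc: "deriv (gegenbauer l (Suc k)) x = 2 * l * gegenbauer (l + 1) k x"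
  by (rule DERIV_imp_deriv[OF has_real_derivative_gegenbauer])

lemma has_real_derivative_deriv_gegenbauer:
  "(gegenbauer l k has_real_derivative deriv (gegenbauer l k) x) (at x)"
proof (cases k)
  case 0
  have "gegenbauer l 0 = (\<lambda>_. 1)"
    by auto
  then show ?thesis
    using 0 by simp
qed (simp add: deriv_gegenbauer_Suc has_real_derivative_gegenbauer)

lemma gegenbauer_ode:
  "4 * l * (l + 1) * (1 - x\<^sup>2) * gegenbauer (l + 2) k x
     - 2 * l * (2 * l + 1) * x * gegenbauer (l + 1) (Suc k) x
     + (real k + 2) * (real k + 2 + 2 * l) * gegenbauer l (Suc (Suc k)) x = 0"
proof (cases k)
  case 0
  then show ?thesis
    by (simp add: gegenbauer_Suc_Suc field_simps power2_eq_square)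
next
  case (Suc j)
  have ll: "l + 1 + 1 = l + 2"
    by simp
  define A E1 E0 D0 D where "A = gegenbauer l (Suc (Suc k)) x" and "E1 = gegenbauer (l + 1) (Suc k) x"
    and "E0 = gegenbauer (l + 1) k x" and "D0 = gegenbauer (l + 2) k x" and "D = gegenbauer (l + 2) j x"
  have "(real k + 2) * A = 2 * l * (x * E1 - E0)"
    using gegenbauer_Suc_Suc_recurrence[of k l x] by (simp add: A_def E1_def E0_def)
  moreover have "(real j + 2) * E1 = 2 * (l + 1) * (x * D0 - D)"
    using gegenbauer_Suc_Suc_recurrence[of j "l + 1" x] Suc by (simp add: E1_def D0_def D_def ll)
  moreover have "(real j + 1 + 2 * (l + 1)) * E0 = 2 * (l + 1) * (D0 - x * D)"
    using gegenbauer_Suc_param_shift[of j "l + 1" x] Suc by (simp add: E0_def D0_def D_def ll)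
  moreover have "4 * l * (l + 1) * (1 - x\<^sup>2) * D0 - 2 * l * (2 * l + 1) * x * E1 + (real k + 2) * (real k + 2 + 2 * l) * A
      = (real k + 2 + 2 * l) * ((real k + 2) * A - 2 * l * (x * E1 - E0))
        + 2 * l * x * ((real j + 2) * E1 - 2 * (l + 1) * (x * D0 - D))
        - 2 * l * ((real j + 1 + 2 * (l + 1)) * E0 - 2 * (l + 1) * (D0 - x * D))"
    using Suc by (simp add: algebra_simps power2_eq_square)
  ultimately show ?thesis
    by (simp add: A_def E1_def D0_def)
qed

lemma deriv_gegenbauer_param_lowering:
  assumes "0 < m"
  shows "(1 - x\<^sup>2) * deriv (gegenbauer (m + 1) k) x - (2 * m + 1) * x * gegenbauer (m + 1) k x
           = - ((real k + 1) * (real k + 1 + 2 * m) / (2 * m)) * gegenbauer m (Suc k) x"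
proof (cases k)
  case 0
  have "gegenbauer (m + 1) 0 = (\<lambda>_. 1)"
    by auto
  then show ?thesis
    using 0 assms by (simp add: field_simps)
next
  case (Suc j)
  have "m + 1 + 1 = m + 2"
    by simp
  then show ?thesis
    using Suc gegenbauer_ode[of m x j] assms by (simp add: deriv_gegenbauer_Suc field_simps)
qed

lemma has_real_derivative_gegenbauer_energy:
  fixes m :: real and j :: nat
  assumes "0 < m"
  defines "y \<equiv> gegenbauer m (Suc (Suc j))" and "y' \<equiv> \<lambda>x. 2 * m * gegenbauer (m + 1) (Suc j) x"
    and "K \<equiv> (real j + 2) * (real j + 2 + 2 * m)"
  shows "((\<lambda>x. (y x)\<^sup>2 + (1 - x\<^sup>2) * (y' x)\<^sup>2 / K) has_real_derivative 4 * m * x * (y' x)\<^sup>2 / K) (at x)"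
proof -
  have ll: "m + 1 + 1 = m + 2"
    by simp
  have K: "K > 0"
    using assms by (simp add: K_def)
  have "((\<lambda>x. (y x)\<^sup>2 + (1 - x\<^sup>2) * (y' x)\<^sup>2 / K) has_real_derivative 2 * y x * y' x
      + (- 2 * x * (y' x)\<^sup>2 + 2 * y' x * (4 * m * (m + 1) * (1 - x\<^sup>2) * gegenbauer (m + 2) j x)) / K) (at x)"
    unfolding y_def y'_def using K
    by (auto intro!: derivative_eq_intros has_real_derivative_gegenbauer simp: ll field_simps power2_eq_square)
  moreover have "4 * m * (m + 1) * (1 - x\<^sup>2) * gegenbauer (m + 2) j x = (2 * m + 1) * x * y' x - K * y x"
    using gegenbauer_ode[of m x j] by (simp add: y_def y'_def K_def algebra_simps)
  ultimately show ?thesis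
    using K by (simp only:) (simp add: field_simps power2_eq_square)
qed

lemma abs_gegenbauer_le_abs_gegenbauer_1:
  assumes "0 < m" "\<bar>x\<bar> \<le> 1"
  shows "\<bar>gegenbauer m k x\<bar> \<le> \<bar>gegenbauer m k 1\<bar>"
proof (cases "k \<le> 1")
  case True
  then show ?thesis
    using assms by (auto simp: le_Suc_eq abs_mult)
next
  case False
  then obtain j where k: "k = Suc (Suc j)"
    using less_imp_Suc_add[of 1 k] by auto
  define y y' where "y = gegenbauer m k" and "y' = (\<lambda>x. 2 * m * gegenbauer (m + 1) (Suc j) x)"
  define K where "K = (real j + 2) * (real j + 2 + 2 * m)"
  \<comment> \<open>The energy of the Gegenbauer ODE increases on \<open>[0, 1]\<close> and dominates \<open>y\<^sup>2\<close>.\<close>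
  define \<Phi> where "\<Phi> = (\<lambda>x. (y x)\<^sup>2 + (1 - x\<^sup>2) * (y' x)\<^sup>2 / K)"
  have K: "K > 0"
    using assms by (simp add: K_def)
  have \<Phi>': "(\<Phi> has_real_derivative 4 * m * x * (y' x)\<^sup>2 / K) (at x)" for x
    using has_real_derivative_gegenbauer_energy[OF assms(1), of j x] by (simp add: \<Phi>_def y_def y'_def K_def k)
  have cont: "continuous_on {z..1} \<Phi>" for z
    using \<Phi>' by (meson DERIV_isCont continuous_at_imp_continuous_on)
  have mono: "\<Phi> z \<le> \<Phi> 1" if "0 \<le> z" "z \<le> 1" for z
  proof (rule DERIV_nonneg_imp_increasing_open[OF that(2) _ cont])
    fix u :: real
    assume "z < u"
    then show "\<exists>d. (\<Phi> has_real_derivative d) (at u) \<and> 0 \<le> d"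
      using \<Phi>' that assms K by (intro exI[of _ "4 * m * u * (y' u)\<^sup>2 / K"]) auto
  qed
  have "(y z)\<^sup>2 \<le> (y 1)\<^sup>2" if "0 \<le> z" "z \<le> 1" for z
  proof -
    have "(y z)\<^sup>2 \<le> \<Phi> z"
      using that K by (simp add: \<Phi>_def abs_square_le_1)
    also have "\<dots> \<le> \<Phi> 1"
      using mono that .
    finally show ?thesis
      by (simp add: \<Phi>_def)
  qed
  then have "\<bar>y \<bar>x\<bar>\<bar> \<le> \<bar>y 1\<bar>"
    using assms by (simp add: abs_le_square_iff)
  then show ?thesis
    by (cases "x \<ge> 0") (simp_all add: y_def gegenbauer_minus abs_mult)
qed

lemma fact_le_pochhammer: "1 \<le> c \<Longrightarrow> fact k \<le> pochhammer (c :: real) k"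
proof (induction k)
  case (Suc k)
  then have "fact k * (real k + 1) \<le> pochhammer c k * (c + real k)"
    by (intro mult_mono) (auto simp: pochhammer_nonneg)
  then show ?case
    by (simp add: pochhammer_Suc algebra_simps)
qed simp

lemma pochhammer_div_fact_le_power:
  assumes "0 \<le> c" "c \<le> real N"
  shows "pochhammer c k / fact k \<le> (real k + 1) ^ N"
proof (induction k)
  case (Suc k)
  have "pochhammer c (Suc k) / fact (Suc k) = pochhammer c k / fact k * ((c + real k) / (real k + 1))"
    by (simp add: pochhammer_Suc field_simps)
  also have "\<dots> \<le> (real k + 1) ^ N * (1 + real N * (1 / (real k + 1)))"
  proof (rule mult_mono)
    have "c * real k \<le> real N * real k"
      using assms by (intro mult_right_mono) auto
    then show "(c + real k) / (real k + 1) \<le> 1 + real N * (1 / (real k + 1))"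
      using assms by (simp add: field_simps)
  qed (use Suc.IH assms in \<open>auto simp: pochhammer_nonneg\<close>)
  also have "\<dots> \<le> (real k + 1) ^ N * (1 + 1 / (real k + 1)) ^ N"
  proof (intro mult_left_mono Bernoulli_inequality)
    have "0 \<le> 1 / (real k + 1)"
      by simp
    then show "- 1 \<le> 1 / (real k + 1)"
      by linarith
  qed simp
  also have "\<dots> = (real (Suc k) + 1) ^ N"
    by (simp add: power_mult_distrib [symmetric] field_simps)
  finally show ?case .
qed simp

lemma abs_gegenbauer_le_power:
  assumes "0 < m" "2 * m \<le> real N" "\<bar>x\<bar> \<le> 1"
  shows "\<bar>gegenbauer m k x\<bar> \<le> (real k + 1) ^ N"
proof -
  have "\<bar>gegenbauer m k x\<bar> \<le> \<bar>gegenbauer m k 1\<bar>"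
    using assms by (intro abs_gegenbauer_le_abs_gegenbauer_1) auto
  also have "\<dots> = pochhammer (2 * m) k / fact k"
  proof -
    have "gegenbauer m k 1 = pochhammer (2 * m) k / fact k"
      using fact_mult_gegenbauer_1[of k m] by (simp add: field_simps)
    then show ?thesis
      using assms by (simp add: pochhammer_nonneg)
  qed
  also have "\<dots> \<le> (real k + 1) ^ N"
    using assms by (intro pochhammer_div_fact_le_power) auto
  finally show ?thesis .
qed

lemma pochhammer_eq_div:
  fixes c :: real
  assumes "0 < c"
  shows "pochhammer c j = c * pochhammer (c + 1) j / (c + real j)"
    and "pochhammer c j = c * (c + 1) * pochhammer (c + 2) j / ((c + real j) * (c + 1 + real j))"
proof -
  have pos: "0 < c + real j" "0 < c + 1 + real j"
    using assms by simp_all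
  have "pochhammer c (Suc j) = pochhammer c j * (c + real j)"
    "pochhammer c (Suc (Suc j)) = pochhammer c j * ((c + real j) * (c + 1 + real j))"
    by (simp_all add: pochhammer_Suc algebra_simps)
  moreover have "pochhammer c (Suc j) = c * pochhammer (c + 1) j"
    "pochhammer c (Suc (Suc j)) = c * (c + 1) * pochhammer (c + 2) j"
    by (simp_all add: pochhammer_rec add.assoc)
  ultimately show "pochhammer c j = c * pochhammer (c + 1) j / (c + real j)"
    and "pochhammer c j = c * (c + 1) * pochhammer (c + 2) j / ((c + real j) * (c + 1 + real j))"
    using pos by (simp_all add: eq_divide_eq)
qed

section \<open>Weighted Gegenbauer polynomials\<close>

lemma abs_mult_less_1: "\<bar>x\<bar> < 1 \<Longrightarrow> \<bar>y\<bar> < 1 \<Longrightarrow> \<bar>x * y\<bar> < (1 :: real)"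
  using abs_mult_less[of x 1 y 1] by (simp add: abs_mult)

lemma has_real_derivative_one_minus_square_powr:
  assumes "\<bar>a\<bar> < 1"
  shows "((\<lambda>a. (1 - a\<^sup>2) powr e) has_real_derivative - 2 * e * a * (1 - a\<^sup>2) powr (e - 1)) (at a)"
proof -
  have "0 < 1 - a\<^sup>2"
    using assms by (simp add: abs_square_less_1)
  then show ?thesis
    using DERIV_fun_powr[of "\<lambda>a. 1 - a\<^sup>2" "- 2 * a" a e]
    by (auto intro!: derivative_eq_intros simp: algebra_simps)
qed

definition weighted_gegenbauer :: "real \<Rightarrow> nat \<Rightarrow> real \<Rightarrow> real" where
  "weighted_gegenbauer m k a = (1 - a\<^sup>2) powr (m - 1 / 2) * gegenbauer m k a"

lemma has_real_derivative_weighted_gegenbauer: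
  assumes "0 < m" "\<bar>a\<bar> < 1"
  shows "(weighted_gegenbauer (m + 1) k has_real_derivative
           - ((real k + 1) * (real k + 1 + 2 * m) / (2 * m)) * weighted_gegenbauer m (Suc k) a) (at a)"
proof -
  define P C D where "P = (1 - a\<^sup>2) powr (m - 1 / 2)" and "C = gegenbauer (m + 1) k a"
    and "D = deriv (gegenbauer (m + 1) k) a"
  have e: "m + 1 - 1 / 2 = (m - 1 / 2) + 1" "m + 1 - 1 / 2 - 1 = m - 1 / 2"
    by simp_all
  have "0 < 1 - a\<^sup>2"
    using assms by (simp add: abs_square_less_1)
  then have weight: "(1 - a\<^sup>2) powr (m + 1 - 1 / 2) = P * (1 - a\<^sup>2)"
    unfolding e(1) powr_add P_def by simp
  have "((\<lambda>a. (1 - a\<^sup>2) powr (m + 1 - 1 / 2)) has_real_derivative - 2 * (m + 1 - 1 / 2) * a * P) (at a)"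
    using has_real_derivative_one_minus_square_powr[OF assms(2), of "m + 1 - 1 / 2"] unfolding e(2) P_def .
  from DERIV_mult[OF this has_real_derivative_deriv_gegenbauer]
  have "(weighted_gegenbauer (m + 1) k has_real_derivative - 2 * (m + 1 - 1 / 2) * a * P * C + D * (P * (1 - a\<^sup>2))) (at a)"
    unfolding weighted_gegenbauer_def[abs_def] weight C_def D_def .
  moreover have "- 2 * (m + 1 - 1 / 2) * a * P * C + D * (P * (1 - a\<^sup>2)) = P * ((1 - a\<^sup>2) * D - (2 * m + 1) * a * C)"
    by (simp add: algebra_simps)
  moreover have "P * ((1 - a\<^sup>2) * D - (2 * m + 1) * a * C)
      = - ((real k + 1) * (real k + 1 + 2 * m) / (2 * m)) * weighted_gegenbauer m (Suc k) a"
    unfolding C_def D_def deriv_gegenbauer_param_lowering[OF assms(1)] weighted_gegenbauer_def P_def by simp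
  ultimately show ?thesis
    by (simp only:)
qed

lemma has_real_derivative_weighted_gegenbauer_mult_gegenbauer:
  assumes "0 < m" "\<bar>\<delta> * s\<bar> < 1"
  shows "((\<lambda>s. weighted_gegenbauer (m + 1) j (\<delta> * s) * gegenbauer m' (Suc k) s) has_real_derivative
           2 * m' * weighted_gegenbauer (m + 1) j (\<delta> * s) * gegenbauer (m' + 1) k s
           - \<delta> * ((real j + 1) * (real j + 1 + 2 * m) / (2 * m))
               * weighted_gegenbauer m (Suc j) (\<delta> * s) * gegenbauer m' (Suc k) s) (at s)"
proof -
  define c where "c = (real j + 1) * (real j + 1 + 2 * m) / (2 * m)"
  have "((\<lambda>s. weighted_gegenbauer (m + 1) j (\<delta> * s)) has_real_derivative
      - c * weighted_gegenbauer m (Suc j) (\<delta> * s) * \<delta>) (at s)"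
    unfolding c_def using assms
    by (intro DERIV_chain2[OF has_real_derivative_weighted_gegenbauer DERIV_cmult_Id])
  then have "((\<lambda>s. weighted_gegenbauer (m + 1) j (\<delta> * s) * gegenbauer m' (Suc k) s) has_real_derivative
      - c * weighted_gegenbauer m (Suc j) (\<delta> * s) * \<delta> * gegenbauer m' (Suc k) s
      + 2 * m' * gegenbauer (m' + 1) k s * weighted_gegenbauer (m + 1) j (\<delta> * s)) (at s)"
    by (rule DERIV_mult[OF _ has_real_derivative_gegenbauer])
  moreover have "- c * weighted_gegenbauer m (Suc j) (\<delta> * s) * \<delta> * gegenbauer m' (Suc k) s
      + 2 * m' * gegenbauer (m' + 1) k s * weighted_gegenbauer (m + 1) j (\<delta> * s)
      = 2 * m' * weighted_gegenbauer (m + 1) j (\<delta> * s) * gegenbauer (m' + 1) k s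
        - \<delta> * c * weighted_gegenbauer m (Suc j) (\<delta> * s) * gegenbauer m' (Suc k) s"
    by (simp add: algebra_simps)
  ultimately show ?thesis
    unfolding c_def by (simp only:)
qed

section \<open>Termwise differentiation of polynomially bounded series\<close>

definition polybounded :: "(nat \<Rightarrow> 'a \<Rightarrow> real) \<Rightarrow> 'a set \<Rightarrow> bool" where
  "polybounded f S \<longleftrightarrow> (\<exists>B P. \<forall>j. \<forall>s\<in>S. \<bar>f j s\<bar> \<le> B * (real j + 1) ^ P)"

lemma polybounded_bounded: "(\<And>j s. s \<in> S \<Longrightarrow> \<bar>f j s\<bar> \<le> B) \<Longrightarrow> polybounded f S"
  unfolding polybounded_def by (intro exI[of _ B] exI[of _ 0]) simp

lemma polybounded_const: "polybounded (\<lambda>j s. c) S"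
  by (rule polybounded_bounded[where B = "\<bar>c\<bar>"]) simp

lemma polybounded_index: "polybounded (\<lambda>j s. real j) S"
  unfolding polybounded_def by (intro exI[of _ 1] exI[of _ 1]) simp

lemma polybounded_add:
  assumes "polybounded f S" "polybounded g S"
  shows "polybounded (\<lambda>j s. f j s + g j s) S"
proof -
  obtain B P C Q where f: "\<And>j s. s \<in> S \<Longrightarrow> \<bar>f j s\<bar> \<le> B * (real j + 1) ^ P"
    and g: "\<And>j s. s \<in> S \<Longrightarrow> \<bar>g j s\<bar> \<le> C * (real j + 1) ^ Q"
    using assms unfolding polybounded_def by blast
  have "\<bar>f j s + g j s\<bar> \<le> (\<bar>B\<bar> + \<bar>C\<bar>) * (real j + 1) ^ (P + Q)" if "s \<in> S" for j s
  proof -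
    have "B * (real j + 1) ^ P \<le> \<bar>B\<bar> * (real j + 1) ^ (P + Q)"
      "C * (real j + 1) ^ Q \<le> \<bar>C\<bar> * (real j + 1) ^ (P + Q)"
      by (intro mult_mono power_increasing; simp)+
    then show ?thesis
      using f[OF that, of j] g[OF that, of j] by (simp add: distrib_right)
  qed
  then show ?thesis
    unfolding polybounded_def by blast
qed

lemma polybounded_mult:
  assumes "polybounded f S" "polybounded g S"
  shows "polybounded (\<lambda>j s. f j s * g j s) S"
proof -
  obtain B P C Q where f: "\<And>j s. s \<in> S \<Longrightarrow> \<bar>f j s\<bar> \<le> B * (real j + 1) ^ P"
    and g: "\<And>j s. s \<in> S \<Longrightarrow> \<bar>g j s\<bar> \<le> C * (real j + 1) ^ Q"
    using assms unfolding polybounded_def by blast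
  have "\<bar>f j s * g j s\<bar> \<le> (B * C) * (real j + 1) ^ (P + Q)" if "s \<in> S" for j s
  proof -
    have "\<bar>f j s\<bar> * \<bar>g j s\<bar> \<le> (B * (real j + 1) ^ P) * (C * (real j + 1) ^ Q)"
      using f[OF that, of j] g[OF that, of j] by (intro mult_mono) auto
    then show ?thesis
      by (simp add: abs_mult power_add algebra_simps)
  qed
  then show ?thesis
    unfolding polybounded_def by blast
qed

lemma polybounded_uminus: "polybounded f S \<Longrightarrow> polybounded (\<lambda>j s. - f j s) S"
  unfolding polybounded_def by simp

lemma polybounded_diff:
  "polybounded f S \<Longrightarrow> polybounded g S \<Longrightarrow> polybounded (\<lambda>j s. f j s - g j s) S"
  using polybounded_add[of f S "\<lambda>j s. - g j s"] polybounded_uminus[of g S] by simp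

lemma polybounded_divide: "polybounded f S \<Longrightarrow> polybounded (\<lambda>j s. f j s / c) S"
  using polybounded_mult[OF _ polybounded_const, of f S "1 / c"] by simp

lemma polybounded_shift:
  assumes "polybounded f S"
  shows "polybounded (\<lambda>j s. f (j + i) s) S"
proof -
  obtain B P where f: "\<And>j s. s \<in> S \<Longrightarrow> \<bar>f j s\<bar> \<le> B * (real j + 1) ^ P"
    using assms unfolding polybounded_def by blast
  have "\<bar>f (j + i) s\<bar> \<le> (\<bar>B\<bar> * (real i + 1) ^ P) * (real j + 1) ^ P" if "s \<in> S" for j s
  proof -
    have "B * (real (j + i) + 1) ^ P \<le> \<bar>B\<bar> * ((real i + 1) * (real j + 1)) ^ P"
      by (intro mult_mono power_mono) (auto simp: algebra_simps)
    also have "\<dots> = (\<bar>B\<bar> * (real i + 1) ^ P) * (real j + 1) ^ P"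
      by (simp add: power_mult_distrib)
    finally show ?thesis
      using f[OF that, of "j + i"] by linarith
  qed
  then show ?thesis
    unfolding polybounded_def by blast
qed

lemmas polybounded_intros =
  polybounded_const polybounded_index polybounded_add polybounded_diff polybounded_uminus
  polybounded_mult polybounded_divide

lemma polybounded_fact_div_pochhammer:
  assumes "1 \<le> c"
  shows "polybounded (\<lambda>j s. fact j / pochhammer c j) S"
proof (rule polybounded_bounded)
  fix j
  have "0 < pochhammer c j"
    using assms by (intro pochhammer_pos) simp
  then show "\<bar>fact j / pochhammer c j\<bar> \<le> 1"
    using fact_le_pochhammer[OF assms, of j] by simp
qed

lemma polybounded_gegenbauer:
  assumes "0 < m" "\<And>s. s \<in> S \<Longrightarrow> \<bar>g s\<bar> \<le> 1"
  shows "polybounded (\<lambda>j s. gegenbauer m j (g s)) S"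
  unfolding polybounded_def using assms real_nat_ceiling_ge[of "2 * m"]
  by (intro exI[of _ 1] exI[of _ "nat \<lceil>2 * m\<rceil>"]) (auto intro: abs_gegenbauer_le_power)

lemma polybounded_weighted_gegenbauer:
  assumes "1 / 2 \<le> m" "\<And>s. s \<in> S \<Longrightarrow> \<bar>g s\<bar> \<le> 1"
  shows "polybounded (\<lambda>j s. weighted_gegenbauer m j (g s)) S"
  unfolding weighted_gegenbauer_def
proof (intro polybounded_mult polybounded_gegenbauer polybounded_bounded)
  fix s assume "s \<in> S"
  then have "0 \<le> 1 - (g s)\<^sup>2" "1 - (g s)\<^sup>2 \<le> 1"
    using assms(2) by (auto simp: abs_square_le_1)
  then show "\<bar>(1 - (g s)\<^sup>2) powr (m - 1 / 2)\<bar> \<le> 1"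
    using assms(1) by (simp add: powr_le1)
qed (use assms in auto)

lemma summable_power_mult_geometric:
  fixes r :: real
  assumes "\<bar>r\<bar> < 1"
  shows "summable (\<lambda>n. (real n + 1) ^ P * r ^ n)"
proof (rule summable_in_conv_radius)
  have "(\<lambda>n. (real (Suc n) / real (Suc (Suc n))) ^ P) \<longlonglongrightarrow> 1 ^ P"
    by (intro tendsto_power LIMSEQ_Suc[OF LIMSEQ_n_over_Suc_n])
  then have "conv_radius (\<lambda>n. (real n + 1) ^ P) = ereal 1"
    by (intro conv_radius_ratio_limit_nonzero) (simp_all add: power_divide add_ac)
  then show "ereal (norm r) < conv_radius (\<lambda>n. (real n + 1) ^ P)"
    using assms by simp
qed

lemma polybounded_geometric_majorant:
  fixes r :: real
  assumes "polybounded f S" "\<bar>r\<bar> < 1"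
  shows "\<exists>M. summable M \<and> (\<forall>j. \<forall>s\<in>S. \<bar>r ^ j * f j s\<bar> \<le> M j)"
proof -
  obtain B P where f: "\<And>j s. s \<in> S \<Longrightarrow> \<bar>f j s\<bar> \<le> B * (real j + 1) ^ P"
    using assms unfolding polybounded_def by blast
  have "summable (\<lambda>j. B * ((real j + 1) ^ P * \<bar>r\<bar> ^ j))"
    using assms by (intro summable_mult summable_power_mult_geometric) simp
  moreover have "\<bar>r ^ j * f j s\<bar> \<le> B * ((real j + 1) ^ P * \<bar>r\<bar> ^ j)" if "s \<in> S" for j s
    using mult_left_mono[OF f[OF that, of j], of "\<bar>r\<bar> ^ j"]
    by (simp add: abs_mult power_abs algebra_simps)
  ultimately show ?thesis
    by blast
qed

lemma summable_polybounded:
  fixes r :: real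
  assumes "polybounded f S" "\<bar>r\<bar> < 1" "s \<in> S"
  shows "summable (\<lambda>j. r ^ j * f j s)"
proof -
  from polybounded_geometric_majorant[OF assms(1,2)] obtain M
    where M: "summable M" "\<forall>j. \<forall>s\<in>S. \<bar>r ^ j * f j s\<bar> \<le> M j"
    by blast
  show ?thesis
    by (rule summable_comparison_test'[OF M(1), of 0]) (use M(2) assms(3) in auto)
qed

lemma deriv_deriv_eqI:
  fixes f :: "real \<Rightarrow> real"
  assumes "open S" "t \<in> S" "\<And>s. s \<in> S \<Longrightarrow> (f has_real_derivative f' s) (at s)"
    and "(f' has_real_derivative D) (at t)"
  shows "deriv (deriv f) t = D"
proof -
  have "eventually (\<lambda>s. deriv f s = f' s) (nhds t)"
    using eventually_nhds_in_open[OF assms(1,2)] by eventually_elim (use assms(3) DERIV_imp_deriv in auto)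
  then have "deriv (deriv f) t = deriv f' t"
    by (rule deriv_cong_ev) simp
  also have "\<dots> = D"
    using assms(4) by (rule DERIV_imp_deriv)
  finally show ?thesis .
qed

lemma deriv_deriv_cong_open:
  fixes f g :: "real \<Rightarrow> real"
  assumes "open S" "t \<in> S" "\<And>s. s \<in> S \<Longrightarrow> f s = g s"
  shows "deriv (deriv f) t = deriv (deriv g) t"
proof -
  have near: "eventually (\<lambda>s. s \<in> S) (nhds x)" if "x \<in> S" for x
    using eventually_nhds_in_open[OF assms(1) that] .
  have "deriv f s = deriv g s" if "s \<in> S" for s
    by (rule deriv_cong_ev[OF eventually_mono[OF near[OF that]]]) (use assms(3) in auto)
  then show ?thesis
    by (intro deriv_cong_ev[OF eventually_mono[OF near[OF assms(2)]]]) auto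
qed

lemma suminf_shifted_combination:
  fixes f g h :: "nat \<Rightarrow> real"
  assumes "summable f" "summable g" "summable h"
  shows "(\<Sum>j. A * f (Suc (Suc j)) - B * g (Suc j) + C * h j)
           = A * (suminf f - f 0 - f 1) - B * (suminf g - g 0) + C * suminf h"
proof -
  have f: "summable (\<lambda>j. f (Suc (Suc j)))" "(\<Sum>j. f (Suc (Suc j))) = suminf f - f 0 - f 1"
    using assms(1) suminf_split_initial_segment[OF assms(1), of 2]
    by (simp_all add: summable_iff_shift[of f 2, simplified] numeral_2_eq_2)
  have g: "summable (\<lambda>j. g (Suc j))" "(\<Sum>j. g (Suc j)) = suminf g - g 0"
    using assms(2) suminf_split_initial_segment[OF assms(2), of 1] by (simp_all add: summable_Suc_iff)
  have s: "summable (\<lambda>j. A * f (Suc (Suc j)))" "summable (\<lambda>j. B * g (Suc j))" "summable (\<lambda>j. C * h j)"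
    using f g assms(3) by (auto intro: summable_mult)
  have "(\<Sum>j. A * f (Suc (Suc j)) - B * g (Suc j) + C * h j)
      = (\<Sum>j. A * f (Suc (Suc j))) - (\<Sum>j. B * g (Suc j)) + (\<Sum>j. C * h j)"
    using s by (simp add: suminf_add [symmetric] suminf_diff [symmetric] summable_diff)
  then show ?thesis
    using f g assms(3) by (simp add: suminf_mult)
qed

lemma deriv_deriv_suminf_geometric:
  fixes f f' f'' :: "nat \<Rightarrow> real \<Rightarrow> real"
  assumes "open S" "convex S" "t \<in> S" "\<bar>r\<bar> < 1"
    and "polybounded f S" "polybounded f' S" "polybounded f'' S"
    and "\<And>j s. s \<in> S \<Longrightarrow> (f j has_real_derivative f' j s) (at s)"
    and "\<And>j s. s \<in> S \<Longrightarrow> (f' j has_real_derivative f'' j s) (at s)"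
  shows "deriv (deriv (\<lambda>s. \<Sum>j. r ^ j * f j s)) t = (\<Sum>j. r ^ j * f'' j t)"
proof -
  have uniform: "uniformly_convergent_on S (\<lambda>n s. \<Sum>j<n. r ^ j * g j s)" if g: "polybounded g S" for g
  proof -
    from polybounded_geometric_majorant[OF g assms(4)] obtain M
      where M: "summable M" "\<forall>j. \<forall>s\<in>S. \<bar>r ^ j * g j s\<bar> \<le> M j"
      by blast
    show ?thesis
      by (rule Weierstrass_m_test'[OF _ M(1)]) (use M(2) in auto)
  qed
  have deriv: "((\<lambda>s. \<Sum>j. r ^ j * g j s) has_real_derivative (\<Sum>j. r ^ j * g' j s)) (at s)"
    if g: "polybounded g S" and g': "polybounded g' S" and s: "s \<in> S"
      and dg: "\<And>j s. s \<in> S \<Longrightarrow> (g j has_real_derivative g' j s) (at s)" for g g' s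
  proof (rule has_field_derivative_series'(2))
    show "((\<lambda>s. r ^ j * g j s) has_real_derivative r ^ j * g' j s) (at s within S)" if "s \<in> S" for j s
      using DERIV_cmult[OF dg[OF that]] by (rule has_field_derivative_at_within)
    show "uniformly_convergent_on S (\<lambda>n s. \<Sum>j<n. r ^ j * g' j s)"
      using uniform[OF g'] .
    show "summable (\<lambda>j. r ^ j * g j t)"
      using summable_polybounded[OF g assms(4,3)] .
    show "s \<in> interior S"
      using s assms(1) by (simp add: interior_open)
  qed (use assms(2,3) in auto)
  show ?thesis
  proof (rule deriv_deriv_eqI[OF assms(1,3)])
    show "((\<lambda>s. \<Sum>j. r ^ j * f j s) has_real_derivative (\<Sum>j. r ^ j * f' j s)) (at s)" if "s \<in> S" for s
      using deriv[OF assms(5,6) that assms(8)] .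
    show "((\<lambda>s. \<Sum>j. r ^ j * f' j s) has_real_derivative (\<Sum>j. r ^ j * f'' j t)) (at t)"
      using deriv[OF assms(6,7,3) assms(9)] .
  qed
qed

section \<open>Integrals against the kernel \<open>\<bar>a - x\<bar>\<close>\<close>

lemma has_real_derivative_integral_upper:
  fixes g :: "real \<Rightarrow> real"
  assumes "continuous_on {u..v} g" "u < a" "a < v"
  shows "((\<lambda>b. integral {u..b} g) has_real_derivative g a) (at a)"
  using integral_has_real_derivative[OF assms(1), of a] assms at_within_Icc_at[of u a v] by simp

lemma integral_abs_diff_mult:
  fixes g :: "real \<Rightarrow> real"
  assumes g: "continuous_on {u..v} g" and a: "u \<le> a" "a \<le> v"
  shows "integral {u..v} (\<lambda>x. \<bar>a - x\<bar> * g x) =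
    2 * a * integral {u..a} g - 2 * integral {u..a} (\<lambda>x. x * g x)
    + integral {u..v} (\<lambda>x. x * g x) - a * integral {u..v} g"
proof -
  have integrable: "h integrable_on {c..d}"
    if "continuous_on {u..v} h" "u \<le> c" "d \<le> v" for h :: "real \<Rightarrow> real" and c d
  proof -
    have "continuous_on {c..d} h"
      using that(1) by (rule continuous_on_subset) (use that in auto)
    then show ?thesis
      by (rule integrable_continuous_interval)
  qed
  have split: "integral {u..v} h = integral {u..a} h + integral {a..v} h"
    if "continuous_on {u..v} h" for h :: "real \<Rightarrow> real"
    using a integrable[OF that] by (intro Henstock_Kurzweil_Integration.integral_combine[symmetric]) auto
  have xg: "continuous_on {u..v} (\<lambda>x. x * g x)" and ag: "continuous_on {u..v} (\<lambda>x. a * g x)"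
    by (intro continuous_intros g)+
  have "integral {u..a} (\<lambda>x. \<bar>a - x\<bar> * g x) = integral {u..a} (\<lambda>x. a * g x - x * g x)"
    by (rule integral_cong) (auto simp: algebra_simps)
  also have "\<dots> = a * integral {u..a} g - integral {u..a} (\<lambda>x. x * g x)"
    using a integrable[OF ag] integrable[OF xg] by (simp add: integral_diff)
  finally have left: "integral {u..a} (\<lambda>x. \<bar>a - x\<bar> * g x) = \<dots>" .
  have "integral {a..v} (\<lambda>x. \<bar>a - x\<bar> * g x) = integral {a..v} (\<lambda>x. x * g x - a * g x)"
    by (rule integral_cong) (auto simp: algebra_simps)
  also have "\<dots> = integral {a..v} (\<lambda>x. x * g x) - a * integral {a..v} g"
    using a integrable[OF ag] integrable[OF xg] by (simp add: integral_diff)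
  finally have right: "integral {a..v} (\<lambda>x. \<bar>a - x\<bar> * g x) = \<dots>" .
  show ?thesis
    using split[of "\<lambda>x. \<bar>a - x\<bar> * g x"] split[OF g] split[OF xg] left right g
    by (simp add: continuous_intros algebra_simps)
qed

lemma has_real_derivative_integral_abs_diff_mult:
  fixes g :: "real \<Rightarrow> real"
  assumes g: "continuous_on {u..v} g" and a: "u < a" "a < v"
  shows "((\<lambda>a. integral {u..v} (\<lambda>x. \<bar>a - x\<bar> * g x)) has_real_derivative
          2 * integral {u..a} g - integral {u..v} g) (at a)"
proof -
  have xg: "continuous_on {u..v} (\<lambda>x. x * g x)"
    by (intro continuous_intros g)
  have "((\<lambda>a. 2 * a * integral {u..a} g - 2 * integral {u..a} (\<lambda>x. x * g x)
      + integral {u..v} (\<lambda>x. x * g x) - a * integral {u..v} g) has_real_derivative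
      2 * integral {u..a} g - integral {u..v} g) (at a)"
    using has_real_derivative_integral_upper[OF g a] has_real_derivative_integral_upper[OF xg a]
    by (auto intro!: derivative_eq_intros)
  then show ?thesis
    by (rule has_field_derivative_transform_within_open[where S = "{u<..<v}"])
       (use a integral_abs_diff_mult[OF g] in auto)
qed

(* Since 0 powr 0 = 0, the function (1 - x^2) powr 0 vanishes at -1 and 1. The weight below
   agrees with (1 - x^2) powr e on the open interval and is continuous on [-1, 1] for every e >= 0. *)
definition powr_weight :: "real \<Rightarrow> real \<Rightarrow> real" where
  "powr_weight e x = (if e = 0 then 1 else (1 - x\<^sup>2) powr e)"

lemma continuous_on_powr_weight:
  assumes "0 \<le> e"
  shows "continuous_on {-1..1} (powr_weight e)"
proof (cases "e = 0")
  case False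
  then have "continuous_on {-1..1} (\<lambda>x. (1 - x\<^sup>2) powr e)"
    using assms by (intro continuous_on_powr' continuous_intros) (auto simp: abs_square_le_1)
  then show ?thesis
    using False by (simp add: powr_weight_def)
qed (simp add: powr_weight_def)

lemma powr_weight_eq: "\<bar>x\<bar> < 1 \<Longrightarrow> powr_weight e x = (1 - x\<^sup>2) powr e"
  by (auto simp: powr_weight_def abs_square_less_1 power2_eq_1_iff)

lemma integral_x_powr_weight:
  assumes "0 \<le> e" "-1 \<le> a" "a \<le> 1"
  shows "integral {-1..a} (\<lambda>x. x * powr_weight e x) = - ((1 - a\<^sup>2) powr (e + 1)) / (2 * (e + 1))"
proof -
  define A where "A = (\<lambda>x::real. - ((1 - x\<^sup>2) powr (e + 1)) / (2 * (e + 1)))"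
  have "continuous_on {-1..a} A"
    unfolding A_def using assms
    by (intro continuous_intros continuous_on_powr') (auto simp: abs_square_le_1)
  moreover have "(A has_vector_derivative x * powr_weight e x) (at x)" if "x \<in> {-1<..<a}" for x
  proof -
    have x: "\<bar>x\<bar> < 1"
      using that assms by auto
    have "(A has_real_derivative - (- 2 * (e + 1) * x * (1 - x\<^sup>2) powr (e + 1 - 1)) / (2 * (e + 1))) (at x)"
      unfolding A_def by (intro DERIV_cdivide DERIV_minus has_real_derivative_one_minus_square_powr x)
    moreover have "- (- 2 * (e + 1) * x * (1 - x\<^sup>2) powr (e + 1 - 1)) / (2 * (e + 1)) = x * powr_weight e x"
      using assms x by (simp add: powr_weight_eq field_simps)
    ultimately show ?thesis
      by (simp add: has_real_derivative_iff_has_vector_derivative)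
  qed
  ultimately have "((\<lambda>x. x * powr_weight e x) has_integral A a - A (-1)) {-1..a}"
    using assms by (intro fundamental_theorem_of_calculus_interior) auto
  then show ?thesis
    using assms by (simp add: integral_unique A_def)
qed

lemma deriv_deriv_integral_abs_diff_powr:
  fixes e \<delta> t :: real
  assumes "0 \<le> e" "\<bar>\<delta> * t\<bar> < 1"
  shows "deriv (deriv (\<lambda>s. integral {-1..1} (\<lambda>x. \<bar>\<delta> * s - x\<bar> * (1 - x\<^sup>2) powr e))) t
           = 2 * \<delta>\<^sup>2 * (1 - (\<delta> * t)\<^sup>2) powr e"
proof -
  define g where "g = powr_weight e"
  have g: "continuous_on {-1..1} g"
    using assms by (simp add: g_def continuous_on_powr_weight)
  define S where "S = {s. \<bar>\<delta> * s\<bar> < 1}"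
  have S: "open S" "t \<in> S"
    unfolding S_def using assms by (auto intro!: open_Collect_less continuous_intros)
  have "(\<lambda>s. integral {-1..1} (\<lambda>x. \<bar>\<delta> * s - x\<bar> * (1 - x\<^sup>2) powr e))
      = (\<lambda>s. integral {-1..1} (\<lambda>x. \<bar>\<delta> * s - x\<bar> * g x))"
    by (intro ext integral_spike[where S = "{-1, 1}"]) (auto simp: g_def powr_weight_eq)
  moreover have "deriv (deriv (\<lambda>s. integral {-1..1} (\<lambda>x. \<bar>\<delta> * s - x\<bar> * g x))) t = 2 * g (\<delta> * t) * \<delta> * \<delta>"
  proof (rule deriv_deriv_eqI[OF S])
    show "((\<lambda>s. integral {-1..1} (\<lambda>x. \<bar>\<delta> * s - x\<bar> * g x)) has_real_derivative
        (2 * integral {-1..\<delta> * s} g - integral {-1..1} g) * \<delta>) (at s)" if "s \<in> S" for s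
      using has_real_derivative_integral_abs_diff_mult[OF g, of "\<delta> * s"] that
      by (intro DERIV_chain2[OF _ DERIV_cmult_Id]) (auto simp: S_def)
    show "((\<lambda>s. (2 * integral {-1..\<delta> * s} g - integral {-1..1} g) * \<delta>) has_real_derivative
        2 * g (\<delta> * t) * \<delta> * \<delta>) (at t)"
      using DERIV_chain2[OF has_real_derivative_integral_upper[OF g, of "\<delta> * t"] DERIV_cmult_Id] assms
      by (auto intro!: derivative_eq_intros)
  qed
  ultimately show ?thesis
    using assms by (simp add: g_def powr_weight_eq power2_eq_square)
qed

lemma has_real_derivative_integral_abs_diff_x_powr_weight:
  assumes "0 \<le> e" "\<bar>a\<bar> < 1"
  shows "((\<lambda>a. integral {-1..1} (\<lambda>x. \<bar>a - x\<bar> * (x * powr_weight e x))) has_real_derivative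
           - ((1 - a\<^sup>2) powr (e + 1)) / (e + 1)) (at a)"
proof -
  have g: "continuous_on {-1..1} (\<lambda>x. x * powr_weight e x)"
    using assms by (intro continuous_intros continuous_on_powr_weight)
  have "2 * integral {-1..a} (\<lambda>x. x * powr_weight e x) - integral {-1..1} (\<lambda>x. x * powr_weight e x)
      = - ((1 - a\<^sup>2) powr (e + 1)) / (e + 1)"
    using assms integral_x_powr_weight[of e a] integral_x_powr_weight[of e 1] by (auto simp: field_simps)
  then show ?thesis
    using has_real_derivative_integral_abs_diff_mult[OF g, of a] assms by (simp add: abs_less_iff)
qed

lemma deriv_deriv_mult_integral_abs_diff_powr:
  fixes c e \<delta> t :: real
  assumes "0 \<le> e" "\<bar>\<delta> * t\<bar> < 1"
  shows "deriv (deriv (\<lambda>s. c * s * integral {-1..1} (\<lambda>x. \<bar>\<delta> * s - x\<bar> * (1 - x\<^sup>2) powr e * x))) t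
           = - 2 * c * \<delta> * (1 - (\<delta> * t)\<^sup>2) powr (e + 1) / (e + 1)
             + 2 * c * t * \<delta>\<^sup>2 * (\<delta> * t) * (1 - (\<delta> * t)\<^sup>2) powr e"
proof -
  define \<Psi> where "\<Psi> = (\<lambda>a. integral {-1..1} (\<lambda>x. \<bar>a - x\<bar> * (x * powr_weight e x)))"
  define P :: "real \<Rightarrow> real" where "P = (\<lambda>a. - ((1 - a\<^sup>2) powr (e + 1)) / (e + 1))"
  define S where "S = {s. \<bar>\<delta> * s\<bar> < 1}"
  have S: "open S" "t \<in> S"
    unfolding S_def using assms by (auto intro!: open_Collect_less continuous_intros)
  have \<Psi>': "(\<Psi> has_real_derivative P a) (at a)" if "\<bar>a\<bar> < 1" for a
    unfolding \<Psi>_def P_def using assms(1) that by (rule has_real_derivative_integral_abs_diff_x_powr_weight)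
  have "(P has_real_derivative - (- 2 * (e + 1) * a * (1 - a\<^sup>2) powr (e + 1 - 1)) / (e + 1)) (at a)"
    if "\<bar>a\<bar> < 1" for a
    unfolding P_def using that by (intro DERIV_cdivide DERIV_minus has_real_derivative_one_minus_square_powr)
  moreover have "- (- 2 * (e + 1) * a * (1 - a\<^sup>2) powr (e + 1 - 1)) / (e + 1) = 2 * a * (1 - a\<^sup>2) powr e" for a
    using assms by (simp add: field_simps)
  ultimately have P': "(P has_real_derivative 2 * a * (1 - a\<^sup>2) powr e) (at a)" if "\<bar>a\<bar> < 1" for a
    using that by simp
  have "integral {-1..1} (\<lambda>x. \<bar>\<delta> * s - x\<bar> * (1 - x\<^sup>2) powr e * x) = \<Psi> (\<delta> * s)" for s
    unfolding \<Psi>_def by (rule integral_spike[where S = "{-1, 1}"]) (auto simp: powr_weight_eq)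
  moreover have "deriv (deriv (\<lambda>s. c * s * \<Psi> (\<delta> * s))) t
      = c * (P (\<delta> * t) * \<delta>) + (c * (P (\<delta> * t) * \<delta>) + c * t * (2 * (\<delta> * t) * (1 - (\<delta> * t)\<^sup>2) powr e * \<delta> * \<delta>))"
  proof (rule deriv_deriv_eqI[OF S])
    show "((\<lambda>s. c * s * \<Psi> (\<delta> * s)) has_real_derivative c * \<Psi> (\<delta> * s) + c * s * (P (\<delta> * s) * \<delta>)) (at s)"
      if "s \<in> S" for s
      using DERIV_chain2[OF \<Psi>'[of "\<delta> * s"] DERIV_cmult_Id] that
      by (auto intro!: derivative_eq_intros simp: S_def)
    show "((\<lambda>s. c * \<Psi> (\<delta> * s) + c * s * (P (\<delta> * s) * \<delta>)) has_real_derivative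
        c * (P (\<delta> * t) * \<delta>) + (c * (P (\<delta> * t) * \<delta>) + c * t * (2 * (\<delta> * t) * (1 - (\<delta> * t)\<^sup>2) powr e * \<delta> * \<delta>))) (at t)"
      using DERIV_chain2[OF \<Psi>'[OF assms(2)] DERIV_cmult_Id] DERIV_chain2[OF P'[OF assms(2)] DERIV_cmult_Id]
      by (auto intro!: derivative_eq_intros)
  qed
  ultimately show ?thesis
    by (simp add: P_def power2_eq_square algebra_simps)
qed

section \<open>The Gegenbauer series\<close>

definition gegenbauer_kernel_term :: "real \<Rightarrow> real \<Rightarrow> real \<Rightarrow> real \<Rightarrow> nat \<Rightarrow> real" where
  "gegenbauer_kernel_term m x y r k =
     fact k / pochhammer (2 * m) k * gegenbauer m k x * gegenbauer m k y * r ^ k"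

lemma summable_gegenbauer_kernel_term:
  assumes "1 / 2 \<le> m" "\<bar>x\<bar> \<le> 1" "\<bar>y\<bar> \<le> 1" "\<bar>r\<bar> < 1"
  shows "summable (gegenbauer_kernel_term m x y r)"
proof -
  have "polybounded (\<lambda>k s. fact k / pochhammer (2 * m) k * gegenbauer m k x * gegenbauer m k s) {y}"
    using assms by (intro polybounded_mult polybounded_fact_div_pochhammer polybounded_gegenbauer) auto
  from summable_polybounded[OF this assms(4)] show ?thesis
    unfolding gegenbauer_kernel_term_def by (simp add: algebra_simps)
qed

lemma has_real_derivative_gegenbauer_series_term:
  fixes l \<delta> s :: real and j :: nat
  assumes l: "0 < l" and \<delta>s: "\<bar>\<delta> * s\<bar> < 1"
  defines "\<alpha> \<equiv> (real j + 1) * (real j + 1 + 2 * (l + 1)) / (2 * (l + 1))"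
    and "\<beta> \<equiv> (real j + 2) * (real j + 2 + 2 * l) / (2 * l)"
  shows "((\<lambda>s. weighted_gegenbauer (l + 2) j (\<delta> * s) * gegenbauer l (Suc (Suc j)) s) has_real_derivative
           2 * l * (weighted_gegenbauer (l + 2) j (\<delta> * s) * gegenbauer (l + 1) (Suc j) s)
           - \<delta> * \<alpha> * (weighted_gegenbauer (l + 1) (Suc j) (\<delta> * s) * gegenbauer l (Suc (Suc j)) s)) (at s)"
    and "((\<lambda>s. 2 * l * (weighted_gegenbauer (l + 2) j (\<delta> * s) * gegenbauer (l + 1) (Suc j) s)
           - \<delta> * \<alpha> * (weighted_gegenbauer (l + 1) (Suc j) (\<delta> * s) * gegenbauer l (Suc (Suc j)) s)) has_real_derivative
           4 * l * (l + 1) * (weighted_gegenbauer (l + 2) j (\<delta> * s) * gegenbauer (l + 2) j s)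
           - 4 * l * \<delta> * \<alpha> * (weighted_gegenbauer (l + 1) (Suc j) (\<delta> * s) * gegenbauer (l + 1) (Suc j) s)
           + \<delta>\<^sup>2 * \<alpha> * \<beta> * (weighted_gegenbauer l (Suc (Suc j)) (\<delta> * s) * gegenbauer l (Suc (Suc j)) s)) (at s)"
proof -
  have ll: "l + 1 + 1 = l + 2"
    by simp
  show d20: "((\<lambda>s. weighted_gegenbauer (l + 2) j (\<delta> * s) * gegenbauer l (Suc (Suc j)) s) has_real_derivative
           2 * l * (weighted_gegenbauer (l + 2) j (\<delta> * s) * gegenbauer (l + 1) (Suc j) s)
           - \<delta> * \<alpha> * (weighted_gegenbauer (l + 1) (Suc j) (\<delta> * s) * gegenbauer l (Suc (Suc j)) s)) (at s)"
    using has_real_derivative_weighted_gegenbauer_mult_gegenbauer[of "l + 1" \<delta> s j l "Suc j"] l \<delta>s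
    unfolding ll \<alpha>_def by (auto elim!: DERIV_cong simp: algebra_simps)
  have d21: "((\<lambda>s. weighted_gegenbauer (l + 2) j (\<delta> * s) * gegenbauer (l + 1) (Suc j) s) has_real_derivative
           2 * (l + 1) * (weighted_gegenbauer (l + 2) j (\<delta> * s) * gegenbauer (l + 2) j s)
           - \<delta> * \<alpha> * (weighted_gegenbauer (l + 1) (Suc j) (\<delta> * s) * gegenbauer (l + 1) (Suc j) s)) (at s)"
    using has_real_derivative_weighted_gegenbauer_mult_gegenbauer[of "l + 1" \<delta> s j "l + 1" j] l \<delta>s
    unfolding ll \<alpha>_def by (auto elim!: DERIV_cong simp: algebra_simps)
  have d10: "((\<lambda>s. weighted_gegenbauer (l + 1) (Suc j) (\<delta> * s) * gegenbauer l (Suc (Suc j)) s) has_real_derivative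
           2 * l * (weighted_gegenbauer (l + 1) (Suc j) (\<delta> * s) * gegenbauer (l + 1) (Suc j) s)
           - \<delta> * \<beta> * (weighted_gegenbauer l (Suc (Suc j)) (\<delta> * s) * gegenbauer l (Suc (Suc j)) s)) (at s)"
    using has_real_derivative_weighted_gegenbauer_mult_gegenbauer[of l \<delta> s "Suc j" l "Suc j"] l \<delta>s
    unfolding \<beta>_def by (auto elim!: DERIV_cong simp: algebra_simps)
  show "((\<lambda>s. 2 * l * (weighted_gegenbauer (l + 2) j (\<delta> * s) * gegenbauer (l + 1) (Suc j) s)
           - \<delta> * \<alpha> * (weighted_gegenbauer (l + 1) (Suc j) (\<delta> * s) * gegenbauer l (Suc (Suc j)) s)) has_real_derivative
           4 * l * (l + 1) * (weighted_gegenbauer (l + 2) j (\<delta> * s) * gegenbauer (l + 2) j s)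
           - 4 * l * \<delta> * \<alpha> * (weighted_gegenbauer (l + 1) (Suc j) (\<delta> * s) * gegenbauer (l + 1) (Suc j) s)
           + \<delta>\<^sup>2 * \<alpha> * \<beta> * (weighted_gegenbauer l (Suc (Suc j)) (\<delta> * s) * gegenbauer l (Suc (Suc j)) s)) (at s)"
    using DERIV_diff[OF DERIV_cmult[OF d21] DERIV_cmult[OF d10]]
    by (rule DERIV_cong) (simp add: algebra_simps power2_eq_square)
qed

lemma deriv_deriv_weighted_gegenbauer_series:
  fixes c l \<delta> \<rho> t :: real
  assumes l: "1 / 2 \<le> l" and \<delta>: "\<bar>\<delta>\<bar> < 1" and \<rho>: "\<bar>\<rho>\<bar> < 1" and t: "-1 < t" "t < 1"
  defines "\<alpha> \<equiv> \<lambda>j. (real j + 1) * (real j + 1 + 2 * (l + 1)) / (2 * (l + 1))"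
    and "\<beta> \<equiv> \<lambda>j. (real j + 2) * (real j + 2 + 2 * l) / (2 * l)"
    and "p \<equiv> \<lambda>j. c * (fact j / pochhammer (2 * l + 4) j)"
  shows "deriv (deriv (\<lambda>s. \<Sum>j. \<rho> ^ j * (p j * (weighted_gegenbauer (l + 2) j (\<delta> * s)
             * gegenbauer l (Suc (Suc j)) s)))) t
       = (\<Sum>j. \<rho> ^ j * (p j * (4 * l * (l + 1) * (weighted_gegenbauer (l + 2) j (\<delta> * t) * gegenbauer (l + 2) j t)
             - 4 * l * \<delta> * \<alpha> j * (weighted_gegenbauer (l + 1) (Suc j) (\<delta> * t) * gegenbauer (l + 1) (Suc j) t)
             + \<delta>\<^sup>2 * \<alpha> j * \<beta> j * (weighted_gegenbauer l (Suc (Suc j)) (\<delta> * t) * gegenbauer l (Suc (Suc j)) t))))"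
proof (rule deriv_deriv_suminf_geometric[where S = "{-1<..<1}", OF _ _ _ \<rho>])
  have \<delta>s: "\<bar>\<delta> * s\<bar> < 1" if "s \<in> {-1<..<1}" for s
    using abs_mult_less_1[of \<delta> s] that \<delta> by (simp add: abs_less_iff)
  show "((\<lambda>s. p j * (weighted_gegenbauer (l + 2) j (\<delta> * s) * gegenbauer l (Suc (Suc j)) s)) has_real_derivative
      p j * (2 * l * (weighted_gegenbauer (l + 2) j (\<delta> * s) * gegenbauer (l + 1) (Suc j) s)
        - \<delta> * \<alpha> j * (weighted_gegenbauer (l + 1) (Suc j) (\<delta> * s) * gegenbauer l (Suc (Suc j)) s))) (at s)"
    if "s \<in> {-1<..<1}" for j s
    using has_real_derivative_gegenbauer_series_term(1)[of l \<delta> s j] l \<delta>s[OF that]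
    unfolding \<alpha>_def by (intro DERIV_cmult) auto
  show "((\<lambda>s. p j * (2 * l * (weighted_gegenbauer (l + 2) j (\<delta> * s) * gegenbauer (l + 1) (Suc j) s)
        - \<delta> * \<alpha> j * (weighted_gegenbauer (l + 1) (Suc j) (\<delta> * s) * gegenbauer l (Suc (Suc j)) s))) has_real_derivative
      p j * (4 * l * (l + 1) * (weighted_gegenbauer (l + 2) j (\<delta> * s) * gegenbauer (l + 2) j s)
        - 4 * l * \<delta> * \<alpha> j * (weighted_gegenbauer (l + 1) (Suc j) (\<delta> * s) * gegenbauer (l + 1) (Suc j) s)
        + \<delta>\<^sup>2 * \<alpha> j * \<beta> j * (weighted_gegenbauer l (Suc (Suc j)) (\<delta> * s) * gegenbauer l (Suc (Suc j)) s))) (at s)"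
    if "s \<in> {-1<..<1}" for j s
    using has_real_derivative_gegenbauer_series_term(2)[of l \<delta> s j] l \<delta>s[OF that]
    unfolding \<alpha>_def \<beta>_def by (intro DERIV_cmult) auto
  have W: "polybounded (\<lambda>j s. weighted_gegenbauer m (j + i) (\<delta> * s)) {-1<..<1}" if "1 / 2 \<le> m" for m i
    using that \<delta>s by (intro polybounded_shift[OF polybounded_weighted_gegenbauer]) (auto simp: less_imp_le)
  have C: "polybounded (\<lambda>j s. gegenbauer m (j + i) s) {-1<..<1}" if "0 < m" for m i
    using that by (intro polybounded_shift[OF polybounded_gegenbauer]) auto
  note bounded = W[of "l + 2" 0] W[of "l + 1" 1] W[of l 2] C[of "l + 2" 0] C[of "l + 1" 1] C[of l 2]
  have "polybounded (\<lambda>j s. p j) {-1<..<1}"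
    unfolding p_def using l by (intro polybounded_mult polybounded_const polybounded_fact_div_pochhammer) simp
  with bounded l show "polybounded (\<lambda>j s. p j * (weighted_gegenbauer (l + 2) j (\<delta> * s) * gegenbauer l (Suc (Suc j)) s)) {-1<..<1}"
    and "polybounded (\<lambda>j s. p j * (2 * l * (weighted_gegenbauer (l + 2) j (\<delta> * s) * gegenbauer (l + 1) (Suc j) s)
        - \<delta> * \<alpha> j * (weighted_gegenbauer (l + 1) (Suc j) (\<delta> * s) * gegenbauer l (Suc (Suc j)) s))) {-1<..<1}"
    and "polybounded (\<lambda>j s. p j * (4 * l * (l + 1) * (weighted_gegenbauer (l + 2) j (\<delta> * s) * gegenbauer (l + 2) j s)
        - 4 * l * \<delta> * \<alpha> j * (weighted_gegenbauer (l + 1) (Suc j) (\<delta> * s) * gegenbauer (l + 1) (Suc j) s)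
        + \<delta>\<^sup>2 * \<alpha> j * \<beta> j * (weighted_gegenbauer l (Suc (Suc j)) (\<delta> * s) * gegenbauer l (Suc (Suc j)) s))) {-1<..<1}"
    unfolding \<alpha>_def \<beta>_def by (auto intro!: polybounded_intros)
qed (use t in auto)

lemma gegenbauer_series_coefficients:
  fixes l \<delta> \<rho> :: real and j :: nat
  assumes l: "0 < l"
  defines "c0 \<equiv> 2 / ((2 * l + 1) * (2 * l + 3))" and "p \<equiv> fact j / pochhammer (2 * l + 4) j"
    and "\<alpha> \<equiv> (real j + 1) * (real j + 1 + 2 * (l + 1)) / (2 * (l + 1))"
    and "\<beta> \<equiv> (real j + 2) * (real j + 2 + 2 * l) / (2 * l)"
  shows "c0 * p * \<alpha> * \<beta> = 2 * (fact (Suc (Suc j)) / pochhammer (2 * l) (Suc (Suc j)))"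
    and "\<delta> * (l + 1) = l * \<rho> \<Longrightarrow>
           c0 * \<rho> * p * (4 * l * \<delta> * \<alpha>) = 4 * (2 * l + 2) * \<delta>\<^sup>2 / (2 * l + 1) * (fact (Suc j) / pochhammer (2 * l + 2) (Suc j))"
    and "\<delta> * (l + 1) = l * \<rho> \<Longrightarrow>
           c0 * \<rho>\<^sup>2 * (4 * l * (l + 1)) = 2 * (2 * l + 2) ^ 3 * \<delta>\<^sup>2 / ((2 * l + 3) * (2 * l + 1) * (2 * l))"
proof -
  define P A B L where "P = pochhammer (2 * l + 4) j" and "A = 2 * l + 1" and "B = 2 * l + 3" and "L = l + 1"
  have pos: "0 < P" "0 < A" "0 < B" "0 < B + real j" "0 < 2 * l + 2 + real j" "0 < L"
    using l by (simp_all add: P_def A_def B_def L_def pochhammer_pos)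
  have p2: "pochhammer (2 * l + 2) j = (2 * l + 2) * (2 * l + 3) * P / ((2 * l + 2 + real j) * (2 * l + 3 + real j))"
    and p3: "pochhammer (2 * l + 3) j = (2 * l + 3) * P / (2 * l + 3 + real j)"
    using pochhammer_eq_div(2)[of "2 * l + 2" j] pochhammer_eq_div(1)[of "2 * l + 3" j] l
    by (simp_all add: P_def add.assoc)
  have p0: "pochhammer (2 * l) (Suc (Suc j)) = 2 * l * (2 * l + 1) * pochhammer (2 * l + 2) j"
    and p1: "pochhammer (2 * l + 2) (Suc j) = (2 * l + 2) * pochhammer (2 * l + 3) j"
    by (simp_all add: pochhammer_rec add.assoc)
  show "c0 * p * \<alpha> * \<beta> = 2 * (fact (Suc (Suc j)) / pochhammer (2 * l) (Suc (Suc j)))"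
    unfolding c0_def p_def \<alpha>_def \<beta>_def p0 p2 P_def[symmetric] using l pos by (simp add: field_simps)
  assume \<rho>: "\<delta> * (l + 1) = l * \<rho>"
  have \<rho>': "\<rho> = \<delta> * L / l" and L: "2 * l + 2 = 2 * L"
    using \<rho> l by (simp_all add: L_def field_simps)
  have \<alpha>': "\<alpha> = (real j + 1) * (2 * l + 3 + real j) / (2 * L)"
    by (simp add: \<alpha>_def L_def algebra_simps)
  show "c0 * \<rho> * p * (4 * l * \<delta> * \<alpha>) = 4 * (2 * l + 2) * \<delta>\<^sup>2 / (2 * l + 1) * (fact (Suc j) / pochhammer (2 * l + 2) (Suc j))"
    unfolding c0_def p_def p1 p3 \<alpha>' \<rho>' unfolding L P_def[symmetric] A_def[symmetric] B_def[symmetric]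
    using l pos by (simp add: field_simps power2_eq_square)
  show "c0 * \<rho>\<^sup>2 * (4 * l * (l + 1)) = 2 * (2 * l + 2) ^ 3 * \<delta>\<^sup>2 / ((2 * l + 3) * (2 * l + 1) * (2 * l))"
    unfolding c0_def \<rho>' L L_def[symmetric] unfolding A_def[symmetric] B_def[symmetric]
    using l pos by (simp add: field_simps power2_eq_square power3_eq_cube)
qed

lemma gegenbauer_series_term_identity:
  fixes l \<delta> \<rho> t :: real and j :: nat
  assumes l: "0 < l" and \<delta>\<rho>: "\<delta> * (l + 1) = l * \<rho>"
  defines "c0 \<equiv> 2 / ((2 * l + 1) * (2 * l + 3))" and "p \<equiv> fact j / pochhammer (2 * l + 4) j"
    and "\<alpha> \<equiv> (real j + 1) * (real j + 1 + 2 * (l + 1)) / (2 * (l + 1))"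
    and "\<beta> \<equiv> (real j + 2) * (real j + 2 + 2 * l) / (2 * l)"
    and "w \<equiv> \<lambda>m. (1 - (\<delta> * t)\<^sup>2) powr (m - 1 / 2)"
    and "T \<equiv> \<lambda>m. gegenbauer_kernel_term m (\<delta> * t) t \<rho>"
  shows "\<rho> ^ j * (c0 * \<rho>\<^sup>2 * p * (4 * l * (l + 1) * (weighted_gegenbauer (l + 2) j (\<delta> * t) * gegenbauer (l + 2) j t)
             - 4 * l * \<delta> * \<alpha> * (weighted_gegenbauer (l + 1) (Suc j) (\<delta> * t) * gegenbauer (l + 1) (Suc j) t)
             + \<delta>\<^sup>2 * \<alpha> * \<beta> * (weighted_gegenbauer l (Suc (Suc j)) (\<delta> * t) * gegenbauer l (Suc (Suc j)) t)))
       = 2 * \<delta>\<^sup>2 * w l * T l (Suc (Suc j))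
         - 4 * (2 * l + 2) * \<delta>\<^sup>2 / (2 * l + 1) * w (l + 1) * T (l + 1) (Suc j)
         + 2 * (2 * l + 2) ^ 3 * \<delta>\<^sup>2 / ((2 * l + 3) * (2 * l + 1) * (2 * l)) * w (l + 2) * T (l + 2) j"
proof -
  define K2 K3 where "K2 = 4 * (2 * l + 2) * \<delta>\<^sup>2 / (2 * l + 1)"
    and "K3 = 2 * (2 * l + 2) ^ 3 * \<delta>\<^sup>2 / ((2 * l + 3) * (2 * l + 1) * (2 * l))"
  have A: "c0 * p * \<alpha> * \<beta> = 2 * (fact (Suc (Suc j)) / pochhammer (2 * l) (Suc (Suc j)))"
    unfolding c0_def p_def \<alpha>_def \<beta>_def by (rule gegenbauer_series_coefficients(1)[OF l])
  have B: "c0 * \<rho> * p * (4 * l * \<delta> * \<alpha>) = K2 * (fact (Suc j) / pochhammer (2 * l + 2) (Suc j))"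
    unfolding c0_def p_def \<alpha>_def K2_def by (rule gegenbauer_series_coefficients(2)[OF l \<delta>\<rho>])
  have C: "c0 * \<rho>\<^sup>2 * (4 * l * (l + 1)) = K3"
    unfolding c0_def K3_def by (rule gegenbauer_series_coefficients(3)[OF l \<delta>\<rho>])
  have "\<rho> ^ j * (c0 * \<rho>\<^sup>2 * p * (4 * l * (l + 1) * (weighted_gegenbauer (l + 2) j (\<delta> * t) * gegenbauer (l + 2) j t)
             - 4 * l * \<delta> * \<alpha> * (weighted_gegenbauer (l + 1) (Suc j) (\<delta> * t) * gegenbauer (l + 1) (Suc j) t)
             + \<delta>\<^sup>2 * \<alpha> * \<beta> * (weighted_gegenbauer l (Suc (Suc j)) (\<delta> * t) * gegenbauer l (Suc (Suc j)) t)))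
      = (c0 * \<rho>\<^sup>2 * (4 * l * (l + 1))) * w (l + 2) * (p * gegenbauer (l + 2) j (\<delta> * t) * gegenbauer (l + 2) j t * \<rho> ^ j)
        - (c0 * \<rho> * p * (4 * l * \<delta> * \<alpha>)) * w (l + 1)
          * (gegenbauer (l + 1) (Suc j) (\<delta> * t) * gegenbauer (l + 1) (Suc j) t * \<rho> ^ Suc j)
        + (c0 * p * \<alpha> * \<beta>) * \<delta>\<^sup>2 * w l
          * (gegenbauer l (Suc (Suc j)) (\<delta> * t) * gegenbauer l (Suc (Suc j)) t * \<rho> ^ Suc (Suc j))"
    by (simp add: weighted_gegenbauer_def w_def algebra_simps power2_eq_square)
  also have "\<dots> = 2 * \<delta>\<^sup>2 * w l * T l (Suc (Suc j)) - K2 * w (l + 1) * T (l + 1) (Suc j) + K3 * w (l + 2) * T (l + 2) j"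
    unfolding A B C by (simp add: T_def gegenbauer_kernel_term_def p_def algebra_simps)
  finally show ?thesis
    unfolding K2_def K3_def .
qed

lemma gegenbauer_series_eq_weighted_series:
  fixes l \<delta> \<rho> s :: real
  assumes l: "1 / 2 \<le> l" and "\<bar>\<delta> * s\<bar> \<le> 1" "\<bar>s\<bar> \<le> 1" "\<bar>\<rho>\<bar> < 1"
  shows "c * (1 - (\<delta> * s)\<^sup>2) powr (l + 3 / 2) * (\<Sum>j. fact j / pochhammer (2 * l + 4) j * gegenbauer (l + 2) j (\<delta> * s)
             * gegenbauer l (Suc (Suc j)) s * \<rho> ^ Suc (Suc j))
       = (\<Sum>j. \<rho> ^ j * (c * \<rho>\<^sup>2 * (fact j / pochhammer (2 * l + 4) j)
             * (weighted_gegenbauer (l + 2) j (\<delta> * s) * gegenbauer l (Suc (Suc j)) s)))"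
proof -
  define q where "q = (\<lambda>j. \<rho> ^ j * (fact j / pochhammer (2 * l + 4) j * gegenbauer (l + 2) j (\<delta> * s)
    * gegenbauer l (Suc (Suc j)) s))"
  have "polybounded (\<lambda>j x. fact j / pochhammer (2 * l + 4) j * gegenbauer (l + 2) j (\<delta> * s) * gegenbauer l (j + 2) x) {s}"
    using assms by (intro polybounded_mult polybounded_fact_div_pochhammer polybounded_gegenbauer[where g = "\<lambda>_. \<delta> * s"]
          polybounded_shift[OF polybounded_gegenbauer]) auto
  from summable_polybounded[OF this assms(4) singletonI] have q: "summable q"
    by (simp add: q_def)
  have "l + 2 - 1 / 2 = l + 3 / 2"
    by simp
  then have e1: "(\<lambda>j. \<rho> ^ j * (c * \<rho>\<^sup>2 * (fact j / pochhammer (2 * l + 4) j)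
      * (weighted_gegenbauer (l + 2) j (\<delta> * s) * gegenbauer l (Suc (Suc j)) s)))
      = (\<lambda>j. (c * \<rho>\<^sup>2 * (1 - (\<delta> * s)\<^sup>2) powr (l + 3 / 2)) * q j)"
    by (simp add: q_def weighted_gegenbauer_def algebra_simps)
  have e2: "(\<lambda>j. fact j / pochhammer (2 * l + 4) j * gegenbauer (l + 2) j (\<delta> * s)
      * gegenbauer l (Suc (Suc j)) s * \<rho> ^ Suc (Suc j)) = (\<lambda>j. \<rho>\<^sup>2 * q j)"
    by (simp add: q_def power2_eq_square algebra_simps)
  show ?thesis
    unfolding e1 e2 suminf_mult[OF q] by (simp add: algebra_simps)
qed

lemma deriv_deriv_gegenbauer_kernel_series:
  fixes l \<delta> \<rho> t :: real
  assumes l: "1 / 2 \<le> l" and \<delta>: "\<bar>\<delta>\<bar> < 1" and \<rho>: "0 < \<rho>" "\<rho> < 1"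
    and \<delta>\<rho>: "\<delta> * (l + 1) = l * \<rho>" and t: "-1 < t" "t < 1"
  defines "T \<equiv> \<lambda>m. gegenbauer_kernel_term m (\<delta> * t) t \<rho>"
  shows "deriv (deriv (\<lambda>s. 2 / ((2 * l + 1) * (2 * l + 3)) * (1 - (\<delta> * s)\<^sup>2) powr (l + 3 / 2) *
             (\<Sum>j. fact j / pochhammer (2 * l + 4) j * gegenbauer (l + 2) j (\<delta> * s)
                   * gegenbauer l (Suc (Suc j)) s * \<rho> ^ Suc (Suc j)))) t
       = 2 * \<delta>\<^sup>2 * (1 - (\<delta> * t)\<^sup>2) powr (l - 1 / 2) * (suminf (T l) - 1 - 2 * l * \<delta> * t\<^sup>2 * \<rho>)
         - 4 * (2 * l + 2) * \<delta>\<^sup>2 / (2 * l + 1) * (1 - (\<delta> * t)\<^sup>2) powr (l + 1 / 2) * (suminf (T (l + 1)) - 1)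
         + 2 * (2 * l + 2) ^ 3 * \<delta>\<^sup>2 / ((2 * l + 3) * (2 * l + 1) * (2 * l))
             * (1 - (\<delta> * t)\<^sup>2) powr (l + 3 / 2) * suminf (T (l + 2))"
    (is "deriv (deriv ?H) t = _")
proof -
  define w where "w = (\<lambda>m. (1 - (\<delta> * t)\<^sup>2) powr (m - 1 / 2))"
  define K2 K3 where "K2 = 4 * (2 * l + 2) * \<delta>\<^sup>2 / (2 * l + 1)"
    and "K3 = 2 * (2 * l + 2) ^ 3 * \<delta>\<^sup>2 / ((2 * l + 3) * (2 * l + 1) * (2 * l))"
  have \<delta>t: "\<bar>\<delta> * t\<bar> \<le> 1" and t1: "\<bar>t\<bar> \<le> 1"
    using abs_mult_less_1[of \<delta> t] \<delta> t by (auto simp: abs_less_iff)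
  have "deriv (deriv ?H) t = deriv (deriv (\<lambda>s. \<Sum>j. \<rho> ^ j * (2 / ((2 * l + 1) * (2 * l + 3)) * \<rho>\<^sup>2
      * (fact j / pochhammer (2 * l + 4) j) * (weighted_gegenbauer (l + 2) j (\<delta> * s) * gegenbauer l (Suc (Suc j)) s)))) t"
  proof (rule deriv_deriv_cong_open[of "{-1<..<1}"])
    fix s :: real
    assume "s \<in> {-1<..<1}"
    then show "?H s = (\<Sum>j. \<rho> ^ j * (2 / ((2 * l + 1) * (2 * l + 3)) * \<rho>\<^sup>2
      * (fact j / pochhammer (2 * l + 4) j) * (weighted_gegenbauer (l + 2) j (\<delta> * s) * gegenbauer l (Suc (Suc j)) s)))"
      using l \<rho> abs_mult_less_1[of \<delta> s] \<delta> by (intro gegenbauer_series_eq_weighted_series) (auto simp: abs_less_iff)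
  qed (use t in auto)
  also have "\<dots> = (\<Sum>j. \<rho> ^ j * (2 / ((2 * l + 1) * (2 * l + 3)) * \<rho>\<^sup>2 * (fact j / pochhammer (2 * l + 4) j)
      * (4 * l * (l + 1) * (weighted_gegenbauer (l + 2) j (\<delta> * t) * gegenbauer (l + 2) j t)
        - 4 * l * \<delta> * ((real j + 1) * (real j + 1 + 2 * (l + 1)) / (2 * (l + 1)))
          * (weighted_gegenbauer (l + 1) (Suc j) (\<delta> * t) * gegenbauer (l + 1) (Suc j) t)
        + \<delta>\<^sup>2 * ((real j + 1) * (real j + 1 + 2 * (l + 1)) / (2 * (l + 1))) * ((real j + 2) * (real j + 2 + 2 * l) / (2 * l))
          * (weighted_gegenbauer l (Suc (Suc j)) (\<delta> * t) * gegenbauer l (Suc (Suc j)) t))))"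
    by (rule deriv_deriv_weighted_gegenbauer_series[OF l \<delta> _ t]) (use \<rho> in simp)
  also have "\<dots> = (\<Sum>j. 2 * \<delta>\<^sup>2 * w l * T l (Suc (Suc j)) - K2 * w (l + 1) * T (l + 1) (Suc j) + K3 * w (l + 2) * T (l + 2) j)"
    unfolding w_def T_def K2_def K3_def
    by (intro arg_cong[where f = suminf] ext gegenbauer_series_term_identity) (use l \<delta>\<rho> in auto)
  also have "\<dots> = 2 * \<delta>\<^sup>2 * w l * (suminf (T l) - T l 0 - T l 1) - K2 * w (l + 1) * (suminf (T (l + 1)) - T (l + 1) 0)
      + K3 * w (l + 2) * suminf (T (l + 2))"
    unfolding T_def using l \<delta>t t1 \<rho>
    by (intro suminf_shifted_combination summable_gegenbauer_kernel_term) auto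
  moreover have "T l 0 = 1" "T (l + 1) 0 = 1" "T l 1 = 2 * l * \<delta> * t\<^sup>2 * \<rho>"
    using l by (simp_all add: T_def gegenbauer_kernel_term_def power2_eq_square)
  moreover have "l + 1 - 1 / 2 = l + 1 / 2" "l + 2 - 1 / 2 = l + 3 / 2"
    by simp_all
  ultimately show ?thesis
    by (simp add: w_def K2_def K3_def)
qed

lemma deriv_deriv_sum_eq_kernel_combination:
  fixes l \<delta> \<rho> t :: real
  assumes l: "1 / 2 \<le> l" and \<delta>: "\<bar>\<delta>\<bar> < 1" and \<rho>: "0 < \<rho>" "\<rho> < 1"
    and \<delta>\<rho>: "\<delta> * (l + 1) = l * \<rho>" and t: "-1 < t" "t < 1"
  shows "deriv (deriv (\<lambda>s. integral {-1..1} (\<lambda>x. \<bar>\<delta> * s - x\<bar> * (1 - x\<^sup>2) powr (l - 1 / 2)))) t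
       + deriv (deriv (\<lambda>s. 2 * l * \<rho> * s * integral {-1..1} (\<lambda>x. \<bar>\<delta> * s - x\<bar> * (1 - x\<^sup>2) powr (l - 1 / 2) * x))) t
       + deriv (deriv (\<lambda>s. 2 / ((2 * l + 1) * (2 * l + 3)) * (1 - (\<delta> * s)\<^sup>2) powr (l + 3 / 2) *
             (\<Sum>j. fact j / pochhammer (2 * l + 4) j * gegenbauer (l + 2) j (\<delta> * s)
                   * gegenbauer l (Suc (Suc j)) s * \<rho> ^ Suc (Suc j)))) t
     = 2 * \<delta>\<^sup>2 * (1 - (\<delta> * t)\<^sup>2) powr (l - 1 / 2) *
         (\<Sum>k. fact k / pochhammer (2 * l) k * gegenbauer l k (\<delta> * t) * gegenbauer l k t * \<rho> ^ k)
       - 4 * (2 * l + 2) * \<delta>\<^sup>2 / (2 * l + 1) * (1 - (\<delta> * t)\<^sup>2) powr (l + 1 / 2) *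
         (\<Sum>k. fact k / pochhammer (2 * l + 2) k * gegenbauer (l + 1) k (\<delta> * t) * gegenbauer (l + 1) k t * \<rho> ^ k)
       + 2 * (2 * l + 2) ^ 3 * \<delta>\<^sup>2 / ((2 * l + 3) * (2 * l + 1) * (2 * l)) * (1 - (\<delta> * t)\<^sup>2) powr (l + 3 / 2) *
         (\<Sum>k. fact k / pochhammer (2 * l + 4) k * gegenbauer (l + 2) k (\<delta> * t) * gegenbauer (l + 2) k t * \<rho> ^ k)"
proof -
  define w0 w1 w2 where "w0 = (1 - (\<delta> * t)\<^sup>2) powr (l - 1 / 2)" and "w1 = (1 - (\<delta> * t)\<^sup>2) powr (l + 1 / 2)"
    and "w2 = (1 - (\<delta> * t)\<^sup>2) powr (l + 3 / 2)"
  define K2 K3 where "K2 = 4 * (2 * l + 2) * \<delta>\<^sup>2 / (2 * l + 1)"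
    and "K3 = 2 * (2 * l + 2) ^ 3 * \<delta>\<^sup>2 / ((2 * l + 3) * (2 * l + 1) * (2 * l))"
  define S0 S1 S2
    where "S0 = (\<Sum>k. fact k / pochhammer (2 * l) k * gegenbauer l k (\<delta> * t) * gegenbauer l k t * \<rho> ^ k)"
      and "S1 = (\<Sum>k. fact k / pochhammer (2 * l + 2) k * gegenbauer (l + 1) k (\<delta> * t) * gegenbauer (l + 1) k t * \<rho> ^ k)"
      and "S2 = (\<Sum>k. fact k / pochhammer (2 * l + 4) k * gegenbauer (l + 2) k (\<delta> * t) * gegenbauer (l + 2) k t * \<rho> ^ k)"
  have \<delta>t: "\<bar>\<delta> * t\<bar> < 1"
    using abs_mult_less_1[of \<delta> t] \<delta> t by (simp add: abs_less_iff)
  have e: "l - 1 / 2 + 1 = l + 1 / 2" "2 * (l + 1) = 2 * l + 2" "2 * (l + 2) = 2 * l + 4"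
    by simp_all
  have "2 * (2 * l * \<rho>) * \<delta> / (l + 1 / 2) = 4 * \<delta> * (l * \<rho>) / (l + 1 / 2)"
    by (simp add: algebra_simps)
  also have "\<dots> = 4 * \<delta> * (\<delta> * (l + 1)) / (l + 1 / 2)"
    by (simp only: \<delta>\<rho>)
  also have "\<dots> = K2"
    using l by (simp add: K2_def field_simps power2_eq_square)
  finally have K2: "2 * (2 * l * \<rho>) * \<delta> / (l + 1 / 2) = K2" .
  have "deriv (deriv (\<lambda>s. integral {-1..1} (\<lambda>x. \<bar>\<delta> * s - x\<bar> * (1 - x\<^sup>2) powr (l - 1 / 2)))) t = 2 * \<delta>\<^sup>2 * w0"
    using deriv_deriv_integral_abs_diff_powr[of "l - 1 / 2" \<delta> t] l \<delta>t by (simp add: w0_def)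
  moreover have "deriv (deriv (\<lambda>s. 2 * l * \<rho> * s * integral {-1..1} (\<lambda>x. \<bar>\<delta> * s - x\<bar> * (1 - x\<^sup>2) powr (l - 1 / 2) * x))) t
      = - (2 * (2 * l * \<rho>) * \<delta> / (l + 1 / 2)) * w1 + 2 * (2 * l * \<rho>) * t * \<delta>\<^sup>2 * (\<delta> * t) * w0"
    using deriv_deriv_mult_integral_abs_diff_powr[of "l - 1 / 2" \<delta> t "2 * l * \<rho>", unfolded e] l \<delta>t
    by (simp add: w0_def w1_def)
  moreover have "deriv (deriv (\<lambda>s. 2 / ((2 * l + 1) * (2 * l + 3)) * (1 - (\<delta> * s)\<^sup>2) powr (l + 3 / 2) *
             (\<Sum>j. fact j / pochhammer (2 * l + 4) j * gegenbauer (l + 2) j (\<delta> * s)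
                   * gegenbauer l (Suc (Suc j)) s * \<rho> ^ Suc (Suc j)))) t
      = 2 * \<delta>\<^sup>2 * w0 * (S0 - 1 - 2 * l * \<delta> * t\<^sup>2 * \<rho>) - K2 * w1 * (S1 - 1) + K3 * w2 * S2"
    using deriv_deriv_gegenbauer_kernel_series[OF l \<delta> \<rho> \<delta>\<rho> t]
    unfolding gegenbauer_kernel_term_def e w0_def w1_def w2_def K2_def K3_def S0_def S1_def S2_def .
  ultimately show ?thesis
    unfolding w0_def[symmetric] w1_def[symmetric] w2_def[symmetric] K2_def[symmetric] K3_def[symmetric]
      S0_def[symmetric] S1_def[symmetric] S2_def[symmetric] K2
    by (simp add: algebra_simps power2_eq_square)
qed

theorem lemma4p1:
  fixes n :: nat and \<rho> \<delta> :: real and F G H :: "real \<Rightarrow> real" and t :: real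
  assumes hn: "n \<ge> 3"
    and h\<rho>: "0 < \<rho>" "\<rho> < 1"
    and h\<delta>: "\<delta> = (real n - 2) / real n * \<rho>"
    and hF: "F = (\<lambda>t. integral {-1..1}
                 (\<lambda>x. \<bar>\<delta> * t - x\<bar> * (1 - x\<^sup>2) powr ((real n - 3) / 2)))"
    and hG: "G = (\<lambda>t. (real n - 2) * \<rho> * t * integral {-1..1}
                 (\<lambda>x. \<bar>\<delta> * t - x\<bar> * (1 - x\<^sup>2) powr ((real n - 3) / 2) * x))"
    and hH: "H = (\<lambda>t. 2 / ((real n)\<^sup>2 - 1) * (1 - \<delta>\<^sup>2 * t\<^sup>2) powr ((real n + 1) / 2) *
                 (\<Sum>j. (let k = j + 2 in
                    fact (k - 2) / pochhammer (real n + 2) (k - 2)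
                    * gegenbauer ((real n + 2) / 2) (k - 2) (\<delta> * t)
                    * gegenbauer ((real n - 2) / 2) k t * \<rho> ^ k)))"
    and ht: "-1 < t" "t < 1"
  shows "deriv (deriv F) t + deriv (deriv G) t + deriv (deriv H) t =
      2 * \<delta>\<^sup>2 * (1 - \<delta>\<^sup>2 * t\<^sup>2) powr ((real n - 3) / 2) *
        (\<Sum>k. fact k / pochhammer (real n - 2) k
              * gegenbauer ((real n - 2) / 2) k (\<delta> * t)
              * gegenbauer ((real n - 2) / 2) k t * \<rho> ^ k)
    - 4 * real n * \<delta>\<^sup>2 / (real n - 1) * (1 - \<delta>\<^sup>2 * t\<^sup>2) powr ((real n - 1) / 2) *
        (\<Sum>k. fact k / pochhammer (real n) k
              * gegenbauer (real n / 2) k (\<delta> * t)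
              * gegenbauer (real n / 2) k t * \<rho> ^ k)
    + 2 * (real n) ^ 3 * \<delta>\<^sup>2 / ((real n + 1) * (real n - 1) * (real n - 2))
        * (1 - \<delta>\<^sup>2 * t\<^sup>2) powr ((real n + 1) / 2) *
        (\<Sum>k. fact k / pochhammer (real n + 2) k
              * gegenbauer ((real n + 2) / 2) k (\<delta> * t)
              * gegenbauer ((real n + 2) / 2) k t * \<rho> ^ k)"
proof -
  define l where "l = (real n - 2) / 2"
  have n: "real n = 2 * l + 2"
    by (simp add: l_def field_simps)
  have l: "1 / 2 \<le> l"
    using hn by (simp add: l_def)
  have \<delta>\<rho>: "\<delta> * (l + 1) = l * \<rho>"
    using hn by (simp add: h\<delta> l_def field_simps)
  have "0 \<le> \<delta>"
    unfolding h\<delta> using hn h\<rho> by (intro mult_nonneg_nonneg divide_nonneg_nonneg) auto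
  moreover have "\<delta> \<le> \<rho>"
    unfolding h\<delta> using hn h\<rho> by (intro mult_left_le_one_le) auto
  ultimately have \<delta>: "\<bar>\<delta>\<bar> < 1"
    using h\<rho> by simp
  have rr: "2 * l + 2 - 3 = 2 * l - 1" "(2 * l - 1) / 2 = l - 1 / 2" "2 * l + 2 - 2 = 2 * l" "2 * l / 2 = l"
    "2 * l + 2 - 1 = 2 * l + 1" "(2 * l + 1) / 2 = l + 1 / 2" "2 * l + 2 + 1 = 2 * l + 3"
    "(2 * l + 3) / 2 = l + 3 / 2" "2 * l + 2 + 2 = 2 * l + 4" "(2 * l + 4) / 2 = l + 2" "(2 * l + 2) / 2 = l + 1"
    "(2 * l + 2)\<^sup>2 - 1 = (2 * l + 1) * (2 * l + 3)"
    by (simp_all add: field_simps power2_eq_square)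
  have j: "Suc (Suc j) - 2 = j" for j :: nat
    by simp
  show ?thesis
    unfolding hF hG hH
    by (simp only: n rr j Let_def add_2_eq_Suc' power_mult_distrib [symmetric])
       (rule deriv_deriv_sum_eq_kernel_combination[OF l \<delta> h\<rho> \<delta>\<rho> ht])
qed

end
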